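(* Let $n,m\in\mathbb{N}$, $W_0\in\mathbb{R}^{n\times m}$, and $1\le r<\operatorname{rank}(W_0)\le\min(n,m)$. Let $W_0=U\Sigma_0V^T$ be a singular value decomposition with $U\in\mathbb{R}^{n\times n}$, $V\in\mathbb{R}^{m\times m}$ orthogonal, $\Sigma_0\in\mathbb{R}^{n\times m}$ diagonal with singular values $s_{0,1}\ge s_{0,2}\ge\dots\ge s_{0,\min(n,m)}\ge 0$, and let $\mathbf{u}_i,\mathbf{v}_i$ denote the $i$-th columns of $U,V$. Assume the LoRA gradient-descent iterates for $\min_{B\in\mathbb{R}^{n\times r},A\in\mathbb{R}^{r\times m}}\frac12\|W_0-BA\|^2$ remain uniformly bounded. Let $\tilde X_0\in\mathbb{R}^{r\times m}$ have all off-diagonal entries zero and all diagonal entries $\tilde x_{ii}(0)$, $i=1,\dots,r$, nonzero (e.g. drawn i.i.d. from $\mathcal{N}(0,\sigma^2)$, $\sigma^2>0$). Let $(Y,X)$ solve the gradient flow $$Y'(t)=\big(W_0-Y(t)X(t)\big)X(t)^T,\quad X'(t)=Y(t)^T\big(W_0-Y(t)X(t)\big),\quad Y(0)=\mathbf{0}_{n\times r},\ X(0)=\tilde X_0V^T.$$ Then $$\lim_{t\to\infty}Y(t)X(t)=\sum_{i=1}^r s_{0,i}\,\mathbf{u}_i\mathbf{v}_i^T\qquad\text{and}\qquad \lim_{t\to\infty}\|W_0-Y(t)X(t)\|^2=\sum_{i=r+1}^{\min(n,m)}s_{0,i}^2,$$ i.e. the flow converges to the optimal rank-$r$ approximation of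 $W_0$ and attains the optimal rank-$r$ approximation error given by the Eckart--Young--Mirsky theorem; this is also the approximation error between the converged rank-$r$ solution and the full-rank solution $W_0$.
   Context: $\|\cdot\|$ is the Frobenius norm. "LoRA gradient-descent iterates" are the iterates of fixed-step gradient descent on the factors $B,A$ of $g(B,A)=\frac12\|W_0-BA\|^2$; uniform boundedness means their Frobenius norms are bounded independently of step size and iteration. The initialization corresponds to $\tilde Y(0)=U^TY(0)=\mathbf{0}$ and $\tilde X(0)=X(0)V=\tilde X_0$ (spectral initialization). *)

theory Defs
  imports "HOL-Analysis.Analysis" "Jordan_Normal_Form.DL_Rank"
begin

definition frob2 :: "real mat \<Rightarrow> real" where
  "frob2 A = (\<Sum>i<dim_row A. \<Sum>j<dim_col A. (A $$ (i,j))^2)"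

definition orth_mat :: "nat \<Rightarrow> real mat \<Rightarrow> bool" where
  "orth_mat k Q \<longleftrightarrow> Q \<in> carrier_mat k k \<and> Q\<^sup>T * Q = 1\<^sub>m k \<and> Q * Q\<^sup>T = 1\<^sub>m k"

(* Fixed-step gradient descent on g(B,A) = 1/2 ||W0 - B A||^2, step size eta,
   starting from (B0, A0): iterate k. *)
fun lora_gd :: "real mat \<Rightarrow> real \<Rightarrow> real mat \<Rightarrow> real mat \<Rightarrow> nat \<Rightarrow> real mat \<times> real mat" where
  "lora_gd W0 eta B0 A0 0 = (B0, A0)"
| "lora_gd W0 eta B0 A0 (Suc k) =
     (let (B, A) = lora_gd W0 eta B0 A0 k; R = W0 - B * A in
       (B + eta \<cdot>\<^sub>m (R * A\<^sup>T), A + eta \<cdot>\<^sub>m (B\<^sup>T * R)))"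

definition mat_deriv_on :: "nat \<Rightarrow> nat \<Rightarrow> (real \<Rightarrow> real mat) \<Rightarrow> (real \<Rightarrow> real mat) \<Rightarrow> bool" where
  "mat_deriv_on p q F F' \<longleftrightarrow>
     (\<forall>t\<ge>0. F t \<in> carrier_mat p q \<and> F' t \<in> carrier_mat p q \<and>
        (\<forall>i<p. \<forall>j<q. ((\<lambda>s. F s $$ (i,j)) has_real_derivative (F' t $$ (i,j))) (at t within {0..})))"

definition mat_tendsto_at_top :: "nat \<Rightarrow> nat \<Rightarrow> (real \<Rightarrow> real mat) \<Rightarrow> real mat \<Rightarrow> bool" where
  "mat_tendsto_at_top p q F L \<longleftrightarrow> L \<in> carrier_mat p q \<and>
     (\<forall>i<p. \<forall>j<q. ((\<lambda>t. F t $$ (i,j)) \<longlongrightarrow> L $$ (i,j)) at_top)"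

end

theory Submission
  imports Defs "HOL-Real_Asymp.Real_Asymp"
begin

text \<open>Rotating by the singular vectors, \<open>A = U\<^sup>T Y\<close> and \<open>B = X V\<close> solve the same gradient flow
  with \<open>W\<^sub>0\<close> replaced by the diagonal \<open>\<Sigma>\<^sub>0\<close>, from \<open>A(0) = 0\<close> and the diagonal \<open>B(0) = X\<^sub>0\<close>.
  This flow keeps \<open>A\<close> and \<open>B\<close> diagonal: every product entering an off-diagonal entry of the
  vector field contains an off-diagonal factor, so the off-diagonal energy \<open>E\<close> obeys
  \<open>E' \<le> K E\<close> on bounded time intervals and, as \<open>E(0) = 0\<close>, vanishes by Gronwall's argument.
  On the diagonal the flow decouples into scalar systems \<open>y' = (s - y x) x\<close>, \<open>x' = y (s - y x)\<close>,
  which conserve \<open>x\<^sup>2 - y\<^sup>2 = x(0)\<^sup>2 > 0\<close>; hence \<open>y x \<rightarrow> s\<close> exponentially fast.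
  Neither the boundedness of the gradient-descent iterates nor the ordering and signs of the
  singular values enter the argument.\<close>

section \<open>Scalar flows\<close>

lemma has_real_derivative_within_nonneg_cong:
  assumes "(f has_real_derivative D) (at t within {0..})" "0 \<le> t"
    and "\<And>s. 0 \<le> s \<Longrightarrow> f s = g s"
  shows "(g has_real_derivative D) (at t within {0..})"
  using has_field_derivative_transform_within[where d=1, OF assms(1)] assms(2,3) by simp

lemma le_initial_value_of_nonpos_deriv:
  fixes g g' :: "real \<Rightarrow> real"
  assumes deriv: "\<And>t. 0 \<le> t \<Longrightarrow> (g has_real_derivative g' t) (at t within {0..})"
    and nonpos: "\<And>t. 0 < t \<Longrightarrow> t < T \<Longrightarrow> g' t \<le> 0"
    and "0 \<le> T"
  shows "g T \<le> g 0"
proof (rule DERIV_nonpos_imp_decreasing_open[OF \<open>0 \<le> T\<close>])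
  show "continuous_on {0..T} g"
    using DERIV_continuous_on[of "{0..}" g g'] deriv continuous_on_subset by fastforce
  fix t assume "0 < t" "t < T"
  then have "(g has_real_derivative g' t) (at t)"
    using deriv[of t] at_within_interior[of t "{0..}"] by simp
  then show "\<exists>y. (g has_real_derivative y) (at t) \<and> y \<le> 0"
    using nonpos \<open>0 < t\<close> \<open>t < T\<close> by blast
qed

lemma gronwall_vanishing:
  fixes E E' :: "real \<Rightarrow> real"
  assumes deriv: "\<And>t. 0 \<le> t \<Longrightarrow> (E has_real_derivative E' t) (at t within {0..})"
    and "E 0 = 0" and nonneg: "\<And>t. 0 \<le> t \<Longrightarrow> 0 \<le> E t"
    and linear: "\<And>T. 0 \<le> T \<Longrightarrow> \<exists>K. \<forall>t\<in>{0..T}. E' t \<le> K * E t"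
    and "0 \<le> T"
  shows "E T = 0"
proof -
  obtain K where K: "\<And>t. t \<in> {0..T} \<Longrightarrow> E' t \<le> K * E t"
    using linear[OF \<open>0 \<le> T\<close>] by blast
  have "(\<lambda>t. E t * exp (- K * t)) T \<le> (\<lambda>t. E t * exp (- K * t)) 0"
  proof (rule le_initial_value_of_nonpos_deriv[OF _ _ \<open>0 \<le> T\<close>])
    show "((\<lambda>t. E t * exp (- K * t)) has_real_derivative (E' t - K * E t) * exp (- K * t))
        (at t within {0..})" if "0 \<le> t" for t
      by (rule derivative_eq_intros refl deriv[OF that])+ (simp add: algebra_simps)
    show "(E' t - K * E t) * exp (- K * t) \<le> 0" if "0 < t" "t < T" for t
      using K[of t] that by (simp add: mult_nonpos_nonneg)
  qed
  then have "E T \<le> 0"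
    using \<open>E 0 = 0\<close> by (simp add: mult_le_0_iff)
  then show ?thesis
    using nonneg[OF \<open>0 \<le> T\<close>] by simp
qed

lemma tendsto_at_top_nonneg_cong:
  fixes f g :: "real \<Rightarrow> 'a::topological_space"
  assumes "\<And>t. 0 \<le> t \<Longrightarrow> f t = g t" and "(f \<longlongrightarrow> l) at_top"
  shows "(g \<longlongrightarrow> l) at_top"
  using assms(2) by (rule Lim_transform_eventually) (use assms(1) in \<open>auto simp: eventually_at_top_linorder\<close>)

lemma scalar_flow_balance:
  fixes y x :: "real \<Rightarrow> real" and s :: real
  assumes dy: "\<And>t. 0 \<le> t \<Longrightarrow> (y has_real_derivative (s - y t * x t) * x t) (at t within {0..})"
    and dx: "\<And>t. 0 \<le> t \<Longrightarrow> (x has_real_derivative y t * (s - y t * x t)) (at t within {0..})"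
    and "0 \<le> t"
  shows "(x t)^2 - (y t)^2 = (x 0)^2 - (y 0)^2"
proof -
  have "((\<lambda>t. (x t)^2 - (y t)^2) has_real_derivative 0) (at t within {0..})" if "t \<in> {0..}" for t
    using that by (auto intro!: derivative_eq_intros dx dy simp: algebra_simps)
  then obtain k where "\<forall>t\<in>{0..}. (x t)^2 - (y t)^2 = k"
    using has_field_derivative_zero_constant[of "{0..}"] by blast
  then show ?thesis
    using \<open>0 \<le> t\<close> by force
qed

text \<open>The residual \<open>q = s - y x\<close> satisfies \<open>q' = -(x\<^sup>2 + y\<^sup>2) q\<close>, and the balance
  \<open>x\<^sup>2 - y\<^sup>2 = x(0)\<^sup>2\<close> keeps \<open>x\<^sup>2 + y\<^sup>2 \<ge> x(0)\<^sup>2 > 0\<close>.\<close>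
lemma scalar_flow_product_tendsto:
  fixes y x :: "real \<Rightarrow> real" and s :: real
  assumes dy: "\<And>t. 0 \<le> t \<Longrightarrow> (y has_real_derivative (s - y t * x t) * x t) (at t within {0..})"
    and dx: "\<And>t. 0 \<le> t \<Longrightarrow> (x has_real_derivative y t * (s - y t * x t)) (at t within {0..})"
    and "y 0 = 0" and "x 0 \<noteq> 0"
  shows "((\<lambda>t. y t * x t) \<longlongrightarrow> s) at_top"
proof -
  define c where "c = (x 0)^2"
  have "c > 0" using \<open>x 0 \<noteq> 0\<close> by (simp add: c_def)
  have conserved: "(x t)^2 - (y t)^2 = c" if "0 \<le> t" for t
    using scalar_flow_balance[OF dy dx that] \<open>y 0 = 0\<close> by (simp add: c_def)
  define q where "q t = s - y t * x t" for t
  have decay: "(q t)^2 \<le> s^2 * exp (- 2 * c * t)" if "0 \<le> t" for t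
  proof -
    have "(\<lambda>t. (q t)^2 * exp (2 * c * t)) t \<le> (\<lambda>t. (q t)^2 * exp (2 * c * t)) 0"
    proof (rule le_initial_value_of_nonpos_deriv[OF _ _ that])
      show "((\<lambda>t. (q t)^2 * exp (2 * c * t)) has_real_derivative
          2 * (q u)^2 * exp (2 * c * u) * (c - (x u)^2 - (y u)^2)) (at u within {0..})"
        if "0 \<le> u" for u
        unfolding q_def
        by (rule derivative_eq_intros dx dy refl that)+ (simp add: algebra_simps power2_eq_square)
      show "2 * (q u)^2 * exp (2 * c * u) * (c - (x u)^2 - (y u)^2) \<le> 0" if "0 < u" "u < t" for u
      proof -
        have "c - (x u)^2 - (y u)^2 \<le> 0" using conserved[of u] that by (simp add: algebra_simps)
        then show ?thesis by (simp add: mult_nonneg_nonpos)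
      qed
    qed
    then have "(q t)^2 * exp (2 * c * t) * exp (- 2 * c * t) \<le> s^2 * exp (- 2 * c * t)"
      using \<open>y 0 = 0\<close> by (simp add: q_def mult_right_mono)
    then show ?thesis by (simp add: mult.assoc flip: exp_add)
  qed
  have "((\<lambda>t. (q t)^2) \<longlongrightarrow> 0) at_top"
  proof (rule tendsto_sandwich[of "\<lambda>_. 0" _ _ "\<lambda>t. s^2 * exp (- 2 * c * t)"])
    show "((\<lambda>t. s^2 * exp (- 2 * c * t)) \<longlongrightarrow> 0) at_top"
      using \<open>c > 0\<close> by real_asymp
  qed (use decay in \<open>auto simp: eventually_at_top_linorder intro: exI[of _ 0]\<close>)
  then have "((\<lambda>t. sqrt ((q t)^2)) \<longlongrightarrow> sqrt 0) at_top"
    by (rule tendsto_real_sqrt)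
  then have "(q \<longlongrightarrow> 0) at_top"
    by (simp add: tendsto_rabs_zero_iff)
  then have "((\<lambda>t. s - q t) \<longlongrightarrow> s - 0) at_top"
    by (intro tendsto_intros)
  then show ?thesis by (simp add: q_def)
qed

lemma index_mult_mat_eq_sum:
  assumes "A \<in> carrier_mat p q" "B \<in> carrier_mat q s" "i < p" "j < s"
  shows "(A * B) $$ (i,j) = (\<Sum>l<q. A $$ (i,l) * B $$ (l,j))"
  using assms by (simp add: scalar_prod_def atLeast0LessThan)

lemma sum_eq_single:
  assumes "finite A" "a \<in> A" "\<And>x. x \<in> A \<Longrightarrow> x \<noteq> a \<Longrightarrow> f x = 0"
  shows "sum f A = f a"
  using sum.mono_neutral_left[of A "{a}" f] assms by simp

lemma index_mult_diagonal_right: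
  assumes "M \<in> carrier_mat p k" "D \<in> carrier_mat k q" "diagonal_mat D" "a < p" "l < k" "l < q"
  shows "(M * D) $$ (a,l) = M $$ (a,l) * D $$ (l,l)"
proof -
  have "(M * D) $$ (a,l) = (\<Sum>i<k. M $$ (a,i) * D $$ (i,l))"
    using assms by (intro index_mult_mat_eq_sum)
  also have "\<dots> = M $$ (a,l) * D $$ (l,l)"
    using assms by (intro sum_eq_single) (auto simp: diagonal_mat_def)
  finally show ?thesis .
qed

lemma index_mult_diagonal_left:
  assumes "D \<in> carrier_mat p k" "diagonal_mat D" "M \<in> carrier_mat k q" "l < p" "l < k" "b < q"
  shows "(D * M) $$ (l,b) = D $$ (l,l) * M $$ (l,b)"
proof -
  have "(D * M) $$ (l,b) = (\<Sum>i<k. D $$ (l,i) * M $$ (i,b))"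
    using assms by (intro index_mult_mat_eq_sum)
  also have "\<dots> = D $$ (l,l) * M $$ (l,b)"
    using assms by (intro sum_eq_single) (auto simp: diagonal_mat_def)
  finally show ?thesis .
qed

lemma index_mult_diagonal_mat:
  assumes A: "A \<in> carrier_mat n k" "diagonal_mat A" and B: "B \<in> carrier_mat k m" "diagonal_mat B"
    and "i < n" "j < m"
  shows "(A * B) $$ (i,j) = (if i = j \<and> i < k then A $$ (i,i) * B $$ (i,i) else 0)"
proof (cases "i < k")
  case True
  then show ?thesis
    using index_mult_diagonal_left[OF A B(1)] assms by (auto simp: diagonal_mat_def)
next
  case False
  have "(A * B) $$ (i,j) = (\<Sum>l<k. A $$ (i,l) * B $$ (l,j))"
    using assms by (intro index_mult_mat_eq_sum)
  also have "\<dots> = 0"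
    using A False \<open>i < n\<close> by (intro sum.neutral) (auto simp: diagonal_mat_def)
  finally show ?thesis
    using False by simp
qed

lemma diagonal_mat_transpose: "diagonal_mat A \<Longrightarrow> diagonal_mat A\<^sup>T"
  unfolding diagonal_mat_def by auto

lemma orth_matD:
  assumes "orth_mat n U"
  shows "U \<in> carrier_mat n n" "U\<^sup>T * U = 1\<^sub>m n" "U * U\<^sup>T = 1\<^sub>m n"
  using assms by (auto simp: orth_mat_def)

lemma orth_mat_transpose: "orth_mat n U \<Longrightarrow> orth_mat n U\<^sup>T"
  by (auto simp: orth_mat_def)

lemma orth_mat_cancel_left:
  assumes "orth_mat n U" "M \<in> carrier_mat n k"
  shows "U\<^sup>T * (U * M) = M"
  using assms assoc_mult_mat[of "U\<^sup>T" n n U n M k, symmetric] by (simp add: orth_mat_def)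

lemma orth_mat_cancel_right:
  assumes "orth_mat n U" "M \<in> carrier_mat k n"
  shows "M * U\<^sup>T * U = M"
  using assms assoc_mult_mat[of M k n "U\<^sup>T" n U n] by (simp add: orth_mat_def)

lemma orth_mat_factor_left: "orth_mat n U \<Longrightarrow> Y \<in> carrier_mat n k \<Longrightarrow> U * (U\<^sup>T * Y) = Y"
  using orth_mat_cancel_left[OF orth_mat_transpose] by simp

lemma orth_mat_factor_right: "orth_mat m V \<Longrightarrow> X \<in> carrier_mat k m \<Longrightarrow> X * V * V\<^sup>T = X"
  using orth_mat_cancel_right[OF orth_mat_transpose] by simp

lemma diff_conj_eq_conj_diff:
  fixes A B S U V :: "'a::comm_ring mat"
  assumes U: "U \<in> carrier_mat n n" and V: "V \<in> carrier_mat m m"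
    and A: "A \<in> carrier_mat n r" and B: "B \<in> carrier_mat r m" and S: "S \<in> carrier_mat n m"
  shows "U * S * V\<^sup>T - (U * A) * (B * V\<^sup>T) = U * ((S - A * B) * V\<^sup>T)"
  using assms
  by (simp add: mult_minus_distrib_mat[of U n n "S * V\<^sup>T" m] minus_mult_distrib_mat[of S n m]
      assoc_mult_mat[of U n n A r "B * V\<^sup>T" m] assoc_mult_mat[of A n r B m "V\<^sup>T" m])

lemma (in vec_space) rank_le_nr:
  assumes "A \<in> carrier_mat n nc"
  shows "rank A \<le> n"
proof -
  have "subspace class_ring (span (set (cols A))) V"
    by (metis assms cols_dim carrier_matD(1) span_is_subspace)
  moreover have "vectorspace.fin_dim class_ring (span_vs (set (cols A)))"
    using fin_dim_span_cols assms by auto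
  ultimately show ?thesis
    unfolding rank_def using subspace_dim dim_is_n fin_dim by metis
qed

lemma frob2_nonneg: "0 \<le> frob2 A"
  unfolding frob2_def by (intro sum_nonneg) auto

definition max_abs_le :: "real mat \<Rightarrow> real \<Rightarrow> bool" where
  "max_abs_le M c \<longleftrightarrow> (\<forall>i<dim_row M. \<forall>j<dim_col M. \<bar>M $$ (i,j)\<bar> \<le> c)"

lemma max_abs_leD: "max_abs_le M c \<Longrightarrow> i < dim_row M \<Longrightarrow> j < dim_col M \<Longrightarrow> \<bar>M $$ (i,j)\<bar> \<le> c"
  by (simp add: max_abs_le_def)

lemma max_abs_le_mono: "max_abs_le M c \<Longrightarrow> c \<le> d \<Longrightarrow> max_abs_le M d"
  unfolding max_abs_le_def by (meson order_trans)

lemma max_abs_le_transpose: "max_abs_le M\<^sup>T c \<longleftrightarrow> max_abs_le M c"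
  by (auto simp: max_abs_le_def)

lemma max_abs_le_sqrt_frob2: "max_abs_le A (sqrt (frob2 A))"
  unfolding max_abs_le_def
proof (intro allI impI)
  fix i j assume ij: "i < dim_row A" "j < dim_col A"
  have "(A $$ (i,j))^2 \<le> (\<Sum>j<dim_col A. (A $$ (i,j))^2)"
    using ij by (intro member_le_sum) auto
  also have "\<dots> \<le> frob2 A"
    unfolding frob2_def using ij
    by (intro member_le_sum[where f="\<lambda>i. \<Sum>j<dim_col A. (A $$ (i,j))^2"] sum_nonneg) auto
  finally show "\<bar>A $$ (i,j)\<bar> \<le> sqrt (frob2 A)"
    using real_sqrt_le_mono by fastforce
qed

lemma frob2_eq_0_iff: "frob2 A = 0 \<longleftrightarrow> A = 0\<^sub>m (dim_row A) (dim_col A)"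
proof
  assume "frob2 A = 0"
  then have "\<bar>A $$ (i,j)\<bar> \<le> 0" if "i < dim_row A" "j < dim_col A" for i j
    using max_abs_leD[OF max_abs_le_sqrt_frob2 that] by simp
  then show "A = 0\<^sub>m (dim_row A) (dim_col A)"
    by (intro eq_matI) auto
next
  assume zero: "A = 0\<^sub>m (dim_row A) (dim_col A)"
  have "A $$ (i,j) = 0" if "i < dim_row A" "j < dim_col A" for i j
    using that by (subst zero) simp
  then show "frob2 A = 0"
    by (simp add: frob2_def)
qed

lemma frob2_transpose: "frob2 A\<^sup>T = frob2 A"
  unfolding frob2_def by (simp add: sum.swap[of _ "{..<dim_col A}"])

lemma frob2_eq_sum_diag_gram:
  assumes "A \<in> carrier_mat p q"
  shows "frob2 A = (\<Sum>j<q. (A\<^sup>T * A) $$ (j,j))"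
proof -
  have "(\<Sum>j<q. (A\<^sup>T * A) $$ (j,j)) = (\<Sum>j<q. \<Sum>i<p. (A $$ (i,j))^2)"
    using assms
    by (intro sum.cong refl)
      (simp add: index_mult_mat_eq_sum[of "A\<^sup>T" q p A q] power2_eq_square del: index_mult_mat(1))
  also have "\<dots> = frob2 A"
    unfolding frob2_def using assms by (simp add: sum.swap[of _ "{..<q}"])
  finally show ?thesis by simp
qed

lemma frob2_orth_mult:
  assumes U: "orth_mat n U" and M: "M \<in> carrier_mat n q"
  shows "frob2 (U * M) = frob2 M"
proof -
  note Uc = orth_matD(1)[OF U]
  have "(U * M)\<^sup>T * (U * M) = M\<^sup>T * (U\<^sup>T * (U * M))"
    using Uc M by (simp add: transpose_mult[of U n n M q] assoc_mult_mat[of "M\<^sup>T" q n "U\<^sup>T" n "U * M" q])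
  also have "\<dots> = M\<^sup>T * M"
    using orth_mat_cancel_left[OF U M] by simp
  finally show ?thesis
    using frob2_eq_sum_diag_gram[of "U * M" n q] frob2_eq_sum_diag_gram[OF M] Uc M by simp
qed

lemma frob2_mult_orth_transpose:
  assumes V: "orth_mat q V" and M: "M \<in> carrier_mat p q"
  shows "frob2 (M * V\<^sup>T) = frob2 M"
proof -
  have "(M * V\<^sup>T)\<^sup>T = V * M\<^sup>T"
    using orth_matD(1)[OF V] M by (simp add: transpose_mult[of M p q "V\<^sup>T" q])
  then have "frob2 (M * V\<^sup>T) = frob2 (V * M\<^sup>T)"
    by (metis frob2_transpose)
  also have "\<dots> = frob2 M"
    using frob2_orth_mult[OF V, of "M\<^sup>T" p] M by (simp add: frob2_transpose)
  finally show ?thesis .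
qed

lemma frob2_diagonal_mat:
  assumes "D \<in> carrier_mat p q" "diagonal_mat D"
  shows "frob2 D = (\<Sum>i<min p q. (D $$ (i,i))^2)"
proof -
  have "frob2 D = (\<Sum>i<p. \<Sum>j<q. (D $$ (i,j))^2)"
    using assms by (simp add: frob2_def)
  also have "\<dots> = (\<Sum>i<p. if i < q then (D $$ (i,i))^2 else 0)"
    using assms by (intro sum.cong refl) (auto simp: diagonal_mat_def intro: sum_eq_single)
  also have "\<dots> = (\<Sum>i\<in>{i\<in>{..<p}. i < q}. (D $$ (i,i))^2)"
    by (rule sum.inter_filter[symmetric]) simp
  also have "{i\<in>{..<p}. i < q} = {..<min p q}"
    by auto
  finally show ?thesis .
qed

definition offdiag_mat :: "'a::zero mat \<Rightarrow> 'a mat" where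
  "offdiag_mat A = mat (dim_row A) (dim_col A) (\<lambda>(i,j). if i = j then 0 else A $$ (i,j))"

lemma offdiag_mat_simps [simp]:
  "dim_row (offdiag_mat A) = dim_row A"
  "dim_col (offdiag_mat A) = dim_col A"
  "i < dim_row A \<Longrightarrow> j < dim_col A \<Longrightarrow> offdiag_mat A $$ (i,j) = (if i = j then 0 else A $$ (i,j))"
  by (simp_all add: offdiag_mat_def)

lemma offdiag_mat_transpose: "offdiag_mat A\<^sup>T = (offdiag_mat A)\<^sup>T"
  by (intro eq_matI) auto

lemma diagonal_mat_iff_offdiag_mat_eq_0:
  "diagonal_mat A \<longleftrightarrow> offdiag_mat A = 0\<^sub>m (dim_row A) (dim_col A)"
proof
  assume "diagonal_mat A"
  then show "offdiag_mat A = 0\<^sub>m (dim_row A) (dim_col A)"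
    by (intro eq_matI) (auto simp: diagonal_mat_def)
next
  assume zero: "offdiag_mat A = 0\<^sub>m (dim_row A) (dim_col A)"
  show "diagonal_mat A"
    unfolding diagonal_mat_def
  proof (intro allI impI)
    fix i j assume "i < dim_row A" "j < dim_col A" "i \<noteq> j"
    then show "A $$ (i,j) = 0"
      using arg_cong[OF zero, of "\<lambda>M. M $$ (i,j)"] by simp
  qed
qed

lemma mat_deriv_on_carrier:
  "mat_deriv_on p q F F' \<Longrightarrow> 0 \<le> t \<Longrightarrow> F t \<in> carrier_mat p q"
  by (simp add: mat_deriv_on_def)

lemma mat_deriv_onD:
  "mat_deriv_on p q F F' \<Longrightarrow> 0 \<le> t \<Longrightarrow> i < p \<Longrightarrow> j < q \<Longrightarrow>
    ((\<lambda>s. F s $$ (i,j)) has_real_derivative F' t $$ (i,j)) (at t within {0..})"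
  by (simp add: mat_deriv_on_def)

lemma mat_deriv_on_cong:
  assumes "mat_deriv_on p q F F'"
    and "\<And>t. 0 \<le> t \<Longrightarrow> G t = F t" "\<And>t. 0 \<le> t \<Longrightarrow> G' t = F' t"
  shows "mat_deriv_on p q G G'"
  unfolding mat_deriv_on_def
proof (intro allI impI conjI)
  fix t :: real assume t: "0 \<le> t"
  show "G t \<in> carrier_mat p q" "G' t \<in> carrier_mat p q"
    using assms t by (auto simp: mat_deriv_on_def)
  fix i j assume "i < p" "j < q"
  show "((\<lambda>s. G s $$ (i,j)) has_real_derivative G' t $$ (i,j)) (at t within {0..})"
    unfolding assms(3)[OF t]
    by (rule has_real_derivative_within_nonneg_cong[OF mat_deriv_onD[OF assms(1) t] t])
      (simp_all add: assms(2) \<open>i < p\<close> \<open>j < q\<close>)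
qed

lemma mat_deriv_on_transpose:
  assumes F: "mat_deriv_on p q F F'"
  shows "mat_deriv_on q p (\<lambda>t. (F t)\<^sup>T) (\<lambda>t. (F' t)\<^sup>T)"
  unfolding mat_deriv_on_def
proof (intro allI impI conjI)
  fix t :: real assume t: "0 \<le> t"
  show "(F t)\<^sup>T \<in> carrier_mat q p" "(F' t)\<^sup>T \<in> carrier_mat q p"
    using F t by (auto simp: mat_deriv_on_def)
  fix i j assume ij: "i < q" "j < p"
  have entry: "(F' t)\<^sup>T $$ (i,j) = F' t $$ (j,i)"
    using F t ij by (auto simp: mat_deriv_on_def)
  show "((\<lambda>s. (F s)\<^sup>T $$ (i,j)) has_real_derivative (F' t)\<^sup>T $$ (i,j)) (at t within {0..})"
    unfolding entry
    by (rule has_real_derivative_within_nonneg_cong[OF mat_deriv_onD[OF F t, of j i] t])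
      (use ij F in \<open>auto simp: mat_deriv_on_def\<close>)
qed

lemma mat_deriv_on_mult_left:
  assumes F: "mat_deriv_on p q F F'" and C: "C \<in> carrier_mat k p"
  shows "mat_deriv_on k q (\<lambda>t. C * F t) (\<lambda>t. C * F' t)"
  unfolding mat_deriv_on_def
proof (intro allI impI conjI)
  have carrier: "F s \<in> carrier_mat p q" "F' s \<in> carrier_mat p q" if "0 \<le> s" for s
    using F that by (auto simp: mat_deriv_on_def)
  fix t :: real assume t: "0 \<le> t"
  show "C * F t \<in> carrier_mat k q" "C * F' t \<in> carrier_mat k q"
    using carrier[OF t] C by auto
  fix i j assume ij: "i < k" "j < q"
  have "((\<lambda>s. \<Sum>l<p. C $$ (i,l) * F s $$ (l,j)) has_real_derivative
      (\<Sum>l<p. C $$ (i,l) * F' t $$ (l,j))) (at t within {0..})"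
    using mat_deriv_onD[OF F t] ij by (auto intro!: DERIV_sum DERIV_cmult)
  then show "((\<lambda>s. (C * F s) $$ (i,j)) has_real_derivative (C * F' t) $$ (i,j)) (at t within {0..})"
    unfolding index_mult_mat_eq_sum[OF C carrier(2)[OF t] ij]
    by (rule has_real_derivative_within_nonneg_cong[OF _ t])
      (simp add: index_mult_mat_eq_sum[OF C carrier(1)] ij)
qed

lemma mat_deriv_on_mult_right:
  assumes F: "mat_deriv_on p q F F'" and C: "C \<in> carrier_mat q k"
  shows "mat_deriv_on p k (\<lambda>t. F t * C) (\<lambda>t. F' t * C)"
proof -
  have "mat_deriv_on p k (\<lambda>t. (C\<^sup>T * (F t)\<^sup>T)\<^sup>T) (\<lambda>t. (C\<^sup>T * (F' t)\<^sup>T)\<^sup>T)"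
    using mat_deriv_on_transpose[OF mat_deriv_on_mult_left[OF mat_deriv_on_transpose[OF F]]] C
    by simp
  then show ?thesis
  proof (rule mat_deriv_on_cong)
    have "(C\<^sup>T * M\<^sup>T)\<^sup>T = M * C" if "M \<in> carrier_mat p q" for M
      using that C transpose_mult[of "C\<^sup>T" k q "M\<^sup>T" p] by simp
    then show "F t * C = (C\<^sup>T * (F t)\<^sup>T)\<^sup>T" "F' t * C = (C\<^sup>T * (F' t)\<^sup>T)\<^sup>T" if "0 \<le> t" for t
      using F that by (auto simp: mat_deriv_on_def)
  qed
qed

lemma mat_deriv_on_offdiag_mat:
  assumes F: "mat_deriv_on p q F F'"
  shows "mat_deriv_on p q (\<lambda>t. offdiag_mat (F t)) (\<lambda>t. offdiag_mat (F' t))"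
  unfolding mat_deriv_on_def
proof (intro allI impI conjI)
  fix t :: real assume t: "0 \<le> t"
  show "offdiag_mat (F t) \<in> carrier_mat p q" "offdiag_mat (F' t) \<in> carrier_mat p q"
    using F t unfolding mat_deriv_on_def by (metis carrier_matD carrier_matI offdiag_mat_simps(1,2))+
  fix i j assume ij: "i < p" "j < q"
  have entry: "offdiag_mat (F' t) $$ (i,j) = (if i = j then 0 else F' t $$ (i,j))"
    using F t ij by (auto simp: mat_deriv_on_def)
  show "((\<lambda>s. offdiag_mat (F s) $$ (i,j)) has_real_derivative offdiag_mat (F' t) $$ (i,j))
      (at t within {0..})"
    unfolding entry
    by (rule has_real_derivative_within_nonneg_cong[OF _ t, where f="\<lambda>s. if i = j then 0 else F s $$ (i,j)"])
      (use mat_deriv_onD[OF F t ij] ij F in \<open>auto simp: mat_deriv_on_def\<close>)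
qed

lemma frob2_has_real_derivative:
  assumes F: "mat_deriv_on p q F F'" and t: "0 \<le> t"
  shows "((\<lambda>s. frob2 (F s)) has_real_derivative
      (\<Sum>i<p. \<Sum>j<q. 2 * F t $$ (i,j) * F' t $$ (i,j))) (at t within {0..})"
proof (rule has_real_derivative_within_nonneg_cong[OF _ t])
  show "((\<lambda>s. \<Sum>i<p. \<Sum>j<q. (F s $$ (i,j))^2) has_real_derivative
      (\<Sum>i<p. \<Sum>j<q. 2 * F t $$ (i,j) * F' t $$ (i,j))) (at t within {0..})"
    by (auto intro!: DERIV_sum derivative_eq_intros mat_deriv_onD[OF F t])
  show "(\<Sum>i<p. \<Sum>j<q. (F s $$ (i,j))^2) = frob2 (F s)" if "0 \<le> s" for s
    using mat_deriv_on_carrier[OF F that] by (simp add: frob2_def)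
qed

section \<open>The off-diagonal energy\<close>

lemma abs_mult3_le:
  fixes x y z :: real
  assumes "\<bar>x\<bar> \<le> a" "\<bar>y\<bar> \<le> b" "\<bar>z\<bar> \<le> c"
  shows "\<bar>x * y * z\<bar> \<le> a * b * c"
  unfolding abs_mult using assms by (intro mult_mono) auto

lemma mult_le_of_abs_le:
  fixes x y :: real
  assumes "\<bar>x\<bar> \<le> a" "\<bar>y\<bar> \<le> b"
  shows "x * y \<le> a * b"
proof -
  have "x * y \<le> \<bar>x\<bar> * \<bar>y\<bar>"
    by (simp flip: abs_mult)
  also have "\<dots> \<le> a * b"
    using assms by (intro mult_mono) auto
  finally show ?thesis .
qed

lemma double_sum_le:
  fixes f :: "nat \<Rightarrow> nat \<Rightarrow> real"
  assumes "\<And>i j. i < p \<Longrightarrow> j < q \<Longrightarrow> f i j \<le> K"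
  shows "(\<Sum>i<p. \<Sum>j<q. f i j) \<le> real p * real q * K"
proof -
  have "(\<Sum>i<p. \<Sum>j<q. f i j) \<le> (\<Sum>i<p. \<Sum>j<q. K)"
    using assms by (intro sum_mono) auto
  then show ?thesis by simp
qed

lemma index_residual_mult_transpose:
  fixes A B S :: "'a::comm_ring mat"
  assumes "A \<in> carrier_mat n r" "B \<in> carrier_mat r m" "S \<in> carrier_mat n m" "i < n" "j < r"
  shows "((S - A * B) * B\<^sup>T) $$ (i,j) = (\<Sum>k<m. (S $$ (i,k) - (\<Sum>l<r. A $$ (i,l) * B $$ (l,k))) * B $$ (j,k))"
proof -
  have "((S - A * B) * B\<^sup>T) $$ (i,j) = (\<Sum>k<m. (S - A * B) $$ (i,k) * B\<^sup>T $$ (k,j))"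
    by (rule index_mult_mat_eq_sum) (use assms in auto)
  also have "\<dots> = (\<Sum>k<m. (S $$ (i,k) - (\<Sum>l<r. A $$ (i,l) * B $$ (l,k))) * B $$ (j,k))"
    using assms index_mult_mat_eq_sum[OF assms(1,2,4)] by (intro sum.cong refl) (simp del: index_mult_mat(1))
  finally show ?thesis .
qed

lemma abs_path_product_le:
  fixes a b e :: real
  assumes "\<bar>a\<bar> \<le> c" "\<bar>b\<bar> \<le> c" "\<bar>e\<bar> \<le> c"
    and "i \<noteq> l \<Longrightarrow> \<bar>a\<bar> \<le> \<delta>" "l \<noteq> k \<Longrightarrow> \<bar>b\<bar> \<le> \<delta>" "j \<noteq> k \<Longrightarrow> \<bar>e\<bar> \<le> \<delta>" and "i \<noteq> j"
  shows "\<bar>a * b * e\<bar> \<le> c * c * \<delta>"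
proof -
  consider "i \<noteq> l" | "l \<noteq> k" | "j \<noteq> k"
    using \<open>i \<noteq> j\<close> by blast
  then show ?thesis
  proof cases
    case 1
    then show ?thesis using abs_mult3_le[of a \<delta> b c e c] assms by (simp add: mult_ac)
  next
    case 2
    then show ?thesis using abs_mult3_le[of a c b \<delta> e c] assms by (simp add: mult_ac)
  next
    case 3
    then show ?thesis using abs_mult3_le[of a c b c e \<delta>] assms by (simp add: mult_ac)
  qed
qed

text \<open>Each product \<open>S\<^sub>i\<^sub>k B\<^sub>j\<^sub>k\<close> or \<open>A\<^sub>i\<^sub>l B\<^sub>l\<^sub>k B\<^sub>j\<^sub>k\<close> in an off-diagonal entry
  (\<open>i \<noteq> j\<close>) contains an off-diagonal factor.\<close>
lemma max_abs_le_offdiag_field_left: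
  fixes A B S :: "real mat"
  assumes A: "A \<in> carrier_mat n r" and B: "B \<in> carrier_mat r m"
    and S: "S \<in> carrier_mat n m" "diagonal_mat S"
    and bounded: "max_abs_le A c" "max_abs_le B c" "max_abs_le S c"
    and offdiag: "max_abs_le (offdiag_mat A) \<delta>" "max_abs_le (offdiag_mat B) \<delta>"
  shows "max_abs_le (offdiag_mat ((S - A * B) * B\<^sup>T)) (real m * (c + real r * c^2) * \<delta>)"
  unfolding max_abs_le_def
proof (intro allI impI)
  have A_le: "\<bar>A $$ (i,j)\<bar> \<le> c" "i \<noteq> j \<Longrightarrow> \<bar>A $$ (i,j)\<bar> \<le> \<delta>" if "i < n" "j < r" for i j
    using max_abs_leD[OF bounded(1), of i j] max_abs_leD[OF offdiag(1), of i j] A that by auto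
  have B_le: "\<bar>B $$ (i,j)\<bar> \<le> c" "i \<noteq> j \<Longrightarrow> \<bar>B $$ (i,j)\<bar> \<le> \<delta>" if "i < r" "j < m" for i j
    using max_abs_leD[OF bounded(2), of i j] max_abs_leD[OF offdiag(2), of i j] B that by auto
  fix i j assume "i < dim_row (offdiag_mat ((S - A * B) * B\<^sup>T))" "j < dim_col (offdiag_mat ((S - A * B) * B\<^sup>T))"
  then have ij: "i < n" "j < r"
    using A B by auto
  have "0 \<le> c" "0 \<le> \<delta>"
    using A_le[OF ij] max_abs_leD[OF offdiag(1), of i j] A ij by auto
  show "\<bar>offdiag_mat ((S - A * B) * B\<^sup>T) $$ (i,j)\<bar> \<le> real m * (c + real r * c^2) * \<delta>"
  proof (cases "i = j")
    case True
    then show ?thesis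
      using ij A B \<open>0 \<le> c\<close> \<open>0 \<le> \<delta>\<close> by simp
  next
    case False
    have summand: "\<bar>(S $$ (i,k) - (\<Sum>l<r. A $$ (i,l) * B $$ (l,k))) * B $$ (j,k)\<bar>
        \<le> c * \<delta> + real r * (c * c * \<delta>)" if k: "k < m" for k
    proof -
      have S_part: "\<bar>S $$ (i,k) * B $$ (j,k)\<bar> \<le> c * \<delta>"
        using max_abs_leD[OF bounded(3), of i k] B_le(2)[OF ij(2) k] S False ij k \<open>0 \<le> c\<close> \<open>0 \<le> \<delta>\<close>
        by (cases "k = i") (auto simp: abs_mult diagonal_mat_def intro: mult_mono)
      have paths: "\<bar>A $$ (i,l) * B $$ (l,k) * B $$ (j,k)\<bar> \<le> c * c * \<delta>" if "l < r" for l
        using False A_le[OF ij(1) that] B_le[OF that k] B_le[OF ij(2) k] by (intro abs_path_product_le)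
      have "\<bar>(S $$ (i,k) - (\<Sum>l<r. A $$ (i,l) * B $$ (l,k))) * B $$ (j,k)\<bar>
          = \<bar>S $$ (i,k) * B $$ (j,k) - (\<Sum>l<r. A $$ (i,l) * B $$ (l,k) * B $$ (j,k))\<bar>"
        by (simp add: left_diff_distrib sum_distrib_right)
      also have "\<dots> \<le> \<bar>S $$ (i,k) * B $$ (j,k)\<bar> + (\<Sum>l<r. \<bar>A $$ (i,l) * B $$ (l,k) * B $$ (j,k)\<bar>)"
        by (rule order_trans[OF abs_triangle_ineq4 add_left_mono[OF sum_abs]])
      also have "\<dots> \<le> c * \<delta> + real r * (c * c * \<delta>)"
        using S_part paths by (intro add_mono order_trans[OF sum_bounded_above[where K="c * c * \<delta>"]]) auto
      finally show ?thesis .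
    qed
    have "\<bar>((S - A * B) * B\<^sup>T) $$ (i,j)\<bar> \<le> (\<Sum>k<m. c * \<delta> + real r * (c * c * \<delta>))"
      unfolding index_residual_mult_transpose[OF A B S(1) ij]
      using summand by (intro order_trans[OF sum_abs] sum_mono) auto
    then show ?thesis
      using False ij A B by (simp add: algebra_simps power2_eq_square)
  qed
qed

lemma field_right_eq_transpose_field_left:
  fixes A B S :: "'a::comm_ring mat"
  assumes "A \<in> carrier_mat n r" "B \<in> carrier_mat r m" "S \<in> carrier_mat n m"
  shows "A\<^sup>T * (S - A * B) = ((S\<^sup>T - B\<^sup>T * A\<^sup>T) * A\<^sup>T\<^sup>T)\<^sup>T"
proof -
  have "(S\<^sup>T - B\<^sup>T * A\<^sup>T)\<^sup>T = S - A * B"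
    using assms by (simp add: transpose_minus[of "S\<^sup>T" m n] transpose_mult[of "B\<^sup>T" m r "A\<^sup>T" n])
  moreover have "S\<^sup>T - B\<^sup>T * A\<^sup>T \<in> carrier_mat m n"
    using assms by auto
  ultimately show ?thesis
    using transpose_mult[OF _ assms(1)] by simp
qed

lemma max_abs_le_offdiag_field_right:
  fixes A B S :: "real mat"
  assumes A: "A \<in> carrier_mat n r" and B: "B \<in> carrier_mat r m"
    and S: "S \<in> carrier_mat n m" "diagonal_mat S"
    and bounded: "max_abs_le A c" "max_abs_le B c" "max_abs_le S c"
    and offdiag: "max_abs_le (offdiag_mat A) \<delta>" "max_abs_le (offdiag_mat B) \<delta>"
  shows "max_abs_le (offdiag_mat (A\<^sup>T * (S - A * B))) (real n * (c + real r * c^2) * \<delta>)"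
proof -
  have "max_abs_le (offdiag_mat ((S\<^sup>T - B\<^sup>T * A\<^sup>T) * A\<^sup>T\<^sup>T)) (real n * (c + real r * c^2) * \<delta>)"
    using A B S bounded offdiag
    by (intro max_abs_le_offdiag_field_left[of _ m r _ n])
      (auto simp: diagonal_mat_transpose offdiag_mat_transpose max_abs_le_transpose)
  then show ?thesis
    unfolding field_right_eq_transpose_field_left[OF A B S(1)] offdiag_mat_transpose
    by (simp add: max_abs_le_transpose)
qed

lemma offdiag_energy_deriv_le:
  fixes A B S :: "real mat"
  assumes A: "A \<in> carrier_mat n r" and B: "B \<in> carrier_mat r m"
    and S: "S \<in> carrier_mat n m" "diagonal_mat S"
    and bounded: "max_abs_le A c" "max_abs_le B c" "max_abs_le S c"
  defines "E \<equiv> frob2 (offdiag_mat A) + frob2 (offdiag_mat B)"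
  shows "(\<Sum>i<n. \<Sum>j<r. 2 * offdiag_mat A $$ (i,j) * offdiag_mat ((S - A * B) * B\<^sup>T) $$ (i,j))
       + (\<Sum>i<r. \<Sum>j<m. 2 * offdiag_mat B $$ (i,j) * offdiag_mat (A\<^sup>T * (S - A * B)) $$ (i,j))
     \<le> 4 * real n * real r * real m * (c + real r * c^2) * E"
proof -
  define L where "L = c + real r * c^2"
  have "0 \<le> E"
    unfolding E_def by (simp add: frob2_nonneg add_nonneg_nonneg)
  have offdiag: "max_abs_le (offdiag_mat A) (sqrt E)" "max_abs_le (offdiag_mat B) (sqrt E)"
    by (rule max_abs_le_mono[OF max_abs_le_sqrt_frob2], simp add: E_def frob2_nonneg)+
  note fields = max_abs_le_offdiag_field_left[OF A B S bounded offdiag]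
    max_abs_le_offdiag_field_right[OF A B S bounded offdiag]
  have summand: "2 * x * y \<le> 2 * (k * L * E)"
    if "max_abs_le M (sqrt E)" "max_abs_le N (k * L * sqrt E)"
      "i < dim_row M" "j < dim_col M" "i < dim_row N" "j < dim_col N"
      "x = M $$ (i,j)" "y = N $$ (i,j)" for M N i j x y k
  proof -
    have "x * y \<le> sqrt E * (k * L * sqrt E)"
      using mult_le_of_abs_le[OF max_abs_leD[OF that(1,3,4)] max_abs_leD[OF that(2,5,6)]] that(7,8) by simp
    then show ?thesis
      using \<open>0 \<le> E\<close> by (simp add: mult_ac flip: real_sqrt_mult)
  qed
  have "(\<Sum>i<n. \<Sum>j<r. 2 * offdiag_mat A $$ (i,j) * offdiag_mat ((S - A * B) * B\<^sup>T) $$ (i,j))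
      \<le> real n * real r * (2 * (real m * L * E))"
    using A B S by (intro double_sum_le summand[OF offdiag(1) fields(1)[folded L_def]]) auto
  moreover have "(\<Sum>i<r. \<Sum>j<m. 2 * offdiag_mat B $$ (i,j) * offdiag_mat (A\<^sup>T * (S - A * B)) $$ (i,j))
      \<le> real r * real m * (2 * (real n * L * E))"
    using A B S by (intro double_sum_le summand[OF offdiag(2) fields(2)[folded L_def]]) auto
  ultimately show ?thesis
    by (simp add: L_def algebra_simps)
qed

section \<open>The gradient flow\<close>

definition lora_flow ::
    "nat \<Rightarrow> nat \<Rightarrow> nat \<Rightarrow> real mat \<Rightarrow> (real \<Rightarrow> real mat) \<Rightarrow> (real \<Rightarrow> real mat) \<Rightarrow> bool" where
  "lora_flow n r m W Y X \<longleftrightarrow>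
     mat_deriv_on n r Y (\<lambda>t. (W - Y t * X t) * (X t)\<^sup>T) \<and>
     mat_deriv_on r m X (\<lambda>t. (Y t)\<^sup>T * (W - Y t * X t))"

lemma lora_flow_carrier:
  assumes "lora_flow n r m W Y X" "0 \<le> t"
  shows "Y t \<in> carrier_mat n r" "X t \<in> carrier_mat r m"
  using assms by (simp_all add: lora_flow_def mat_deriv_on_def)

lemma lora_field_orth_conj:
  fixes A B S U V :: "real mat"
  assumes U: "orth_mat n U" and V: "orth_mat m V"
    and A: "A \<in> carrier_mat n r" and B: "B \<in> carrier_mat r m" and S: "S \<in> carrier_mat n m"
  shows "U\<^sup>T * ((U * S * V\<^sup>T - (U * A) * (B * V\<^sup>T)) * (B * V\<^sup>T)\<^sup>T) = (S - A * B) * B\<^sup>T"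
    and "((U * A)\<^sup>T * (U * S * V\<^sup>T - (U * A) * (B * V\<^sup>T))) * V = A\<^sup>T * (S - A * B)"
proof -
  have Uc: "U \<in> carrier_mat n n" and Vc: "V \<in> carrier_mat m m"
    using U V by (simp_all add: orth_mat_def)
  define R where "R = S - A * B"
  have R: "R \<in> carrier_mat n m" and RV: "R * V\<^sup>T \<in> carrier_mat n m"
    using A B S Vc by (auto simp: R_def)
  have residual: "U * S * V\<^sup>T - (U * A) * (B * V\<^sup>T) = U * (R * V\<^sup>T)"
    unfolding R_def by (rule diff_conj_eq_conj_diff[OF Uc Vc A B S])
  have "U\<^sup>T * ((U * (R * V\<^sup>T)) * (V * B\<^sup>T)) = U\<^sup>T * (U * (R * V\<^sup>T * (V * B\<^sup>T)))"
    using Uc Vc RV B by (simp add: assoc_mult_mat[of U n n "R * V\<^sup>T" m "V * B\<^sup>T" r])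
  also have "\<dots> = R * V\<^sup>T * (V * B\<^sup>T)"
    using Vc RV B by (intro orth_mat_cancel_left[OF U, of _ r]) auto
  also have "\<dots> = R * V\<^sup>T * V * B\<^sup>T"
    using Vc RV B by (simp add: assoc_mult_mat[of "R * V\<^sup>T" n m V m "B\<^sup>T" r])
  also have "\<dots> = R * B\<^sup>T"
    using orth_mat_cancel_right[OF V R] by simp
  finally show "U\<^sup>T * ((U * S * V\<^sup>T - (U * A) * (B * V\<^sup>T)) * (B * V\<^sup>T)\<^sup>T) = (S - A * B) * B\<^sup>T"
    unfolding residual R_def[symmetric] using Vc B by (simp add: transpose_mult[of B r m])
  have "(A\<^sup>T * U\<^sup>T) * (U * (R * V\<^sup>T)) * V = A\<^sup>T * (U\<^sup>T * (U * (R * V\<^sup>T))) * V"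
    using Uc A RV by (simp add: assoc_mult_mat[of "A\<^sup>T" r n "U\<^sup>T" n "U * (R * V\<^sup>T)" m])
  also have "\<dots> = A\<^sup>T * (R * V\<^sup>T * V)"
    using orth_mat_cancel_left[OF U RV] A RV Vc by (simp add: assoc_mult_mat[of "A\<^sup>T" r n "R * V\<^sup>T" m V m])
  also have "\<dots> = A\<^sup>T * R"
    using orth_mat_cancel_right[OF V R] by simp
  finally show "((U * A)\<^sup>T * (U * S * V\<^sup>T - (U * A) * (B * V\<^sup>T))) * V = A\<^sup>T * (S - A * B)"
    unfolding residual R_def[symmetric] using Uc A by (simp add: transpose_mult[of U n n A r])
qed

lemma lora_flow_orth_conj:
  assumes flow: "lora_flow n r m W Y X" and U: "orth_mat n U" and V: "orth_mat m V"
    and S: "S \<in> carrier_mat n m" and W: "W = U * S * V\<^sup>T"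
  shows "lora_flow n r m S (\<lambda>t. U\<^sup>T * Y t) (\<lambda>t. X t * V)"
proof -
  have dY: "mat_deriv_on n r Y (\<lambda>t. (W - Y t * X t) * (X t)\<^sup>T)"
    and dX: "mat_deriv_on r m X (\<lambda>t. (Y t)\<^sup>T * (W - Y t * X t))"
    using flow by (simp_all add: lora_flow_def)
  have Uc: "U \<in> carrier_mat n n" and Vc: "V \<in> carrier_mat m m"
    using U V by (simp_all add: orth_mat_def)
  have A: "U\<^sup>T * Y t \<in> carrier_mat n r" and B: "X t * V \<in> carrier_mat r m" if "0 \<le> t" for t
    using lora_flow_carrier[OF flow that] Uc Vc by auto
  have YX: "Y t = U * (U\<^sup>T * Y t)" "X t = X t * V * V\<^sup>T" if "0 \<le> t" for t
    using orth_mat_factor_left[OF U] orth_mat_factor_right[OF V] lora_flow_carrier[OF flow that] by simp_all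
  note field = lora_field_orth_conj[OF U V A B S]
  show ?thesis
    unfolding lora_flow_def
  proof
    show "mat_deriv_on n r (\<lambda>t. U\<^sup>T * Y t)
        (\<lambda>t. (S - U\<^sup>T * Y t * (X t * V)) * (X t * V)\<^sup>T)"
    proof (rule mat_deriv_on_cong[OF mat_deriv_on_mult_left[OF dY, of "U\<^sup>T" n]])
      fix t :: real assume "0 \<le> t"
      show "(S - U\<^sup>T * Y t * (X t * V)) * (X t * V)\<^sup>T = U\<^sup>T * ((W - Y t * X t) * (X t)\<^sup>T)"
        using field(1)[OF \<open>0 \<le> t\<close> \<open>0 \<le> t\<close>] YX[OF \<open>0 \<le> t\<close>] W by metis
    qed (use Uc in auto)
    show "mat_deriv_on r m (\<lambda>t. X t * V)
        (\<lambda>t. (U\<^sup>T * Y t)\<^sup>T * (S - U\<^sup>T * Y t * (X t * V)))"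
    proof (rule mat_deriv_on_cong[OF mat_deriv_on_mult_right[OF dX Vc]])
      fix t :: real assume "0 \<le> t"
      show "(U\<^sup>T * Y t)\<^sup>T * (S - U\<^sup>T * Y t * (X t * V)) = (Y t)\<^sup>T * (W - Y t * X t) * V"
        using field(2)[OF \<open>0 \<le> t\<close> \<open>0 \<le> t\<close>] YX[OF \<open>0 \<le> t\<close>] W by metis
    qed auto
  qed
qed

lemma lora_flow_bounded_on_interval:
  assumes flow: "lora_flow n r m S A B" and "0 \<le> T"
  obtains c where "\<And>t. t \<in> {0..T} \<Longrightarrow> max_abs_le (A t) c \<and> max_abs_le (B t) c" "max_abs_le S c"
proof -
  have dA: "mat_deriv_on n r A (\<lambda>t. (S - A t * B t) * (B t)\<^sup>T)"
    and dB: "mat_deriv_on r m B (\<lambda>t. (A t)\<^sup>T * (S - A t * B t))"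
    using flow by (simp_all add: lora_flow_def)
  define \<Phi> where "\<Phi> t = frob2 (A t) + frob2 (B t) + frob2 S" for t
  have "continuous_on {0..} \<Phi>"
    unfolding \<Phi>_def
    by (intro continuous_intros DERIV_continuous_on[OF frob2_has_real_derivative[OF dA]]
        DERIV_continuous_on[OF frob2_has_real_derivative[OF dB]]) auto
  then have "continuous_on {0..T} \<Phi>"
    by (rule continuous_on_subset) auto
  then obtain t\<^sub>0 where t\<^sub>0: "\<forall>t\<in>{0..T}. \<Phi> t \<le> \<Phi> t\<^sub>0"
    using continuous_attains_sup[of "{0..T}" \<Phi>] \<open>0 \<le> T\<close> by auto
  have "max_abs_le M (sqrt (\<Phi> t\<^sub>0))" if "t \<in> {0..T}" "M \<in> {A t, B t, S}" for M t
  proof (rule max_abs_le_mono[OF max_abs_le_sqrt_frob2])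
    show "sqrt (frob2 M) \<le> sqrt (\<Phi> t\<^sub>0)"
      using bspec[OF t\<^sub>0 that(1)] that(2) frob2_nonneg[of "A t"] frob2_nonneg[of "B t"] frob2_nonneg[of S]
      unfolding \<Phi>_def by (intro real_sqrt_le_mono) auto
  qed
  then show ?thesis
    using that[of "sqrt (\<Phi> t\<^sub>0)"] \<open>0 \<le> T\<close> by auto
qed

lemma lora_flow_stays_diagonal:
  assumes flow: "lora_flow n r m S A B" and S: "S \<in> carrier_mat n m" "diagonal_mat S"
    and diag0: "diagonal_mat (A 0)" "diagonal_mat (B 0)" and "0 \<le> t"
  shows "diagonal_mat (A t) \<and> diagonal_mat (B t)"
proof -
  have dA: "mat_deriv_on n r A (\<lambda>t. (S - A t * B t) * (B t)\<^sup>T)"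
    and dB: "mat_deriv_on r m B (\<lambda>t. (A t)\<^sup>T * (S - A t * B t))"
    using flow by (simp_all add: lora_flow_def)
  define E where "E t = frob2 (offdiag_mat (A t)) + frob2 (offdiag_mat (B t))" for t
  define E' where "E' t =
      (\<Sum>i<n. \<Sum>j<r. 2 * offdiag_mat (A t) $$ (i,j) * offdiag_mat ((S - A t * B t) * (B t)\<^sup>T) $$ (i,j))
    + (\<Sum>i<r. \<Sum>j<m. 2 * offdiag_mat (B t) $$ (i,j) * offdiag_mat ((A t)\<^sup>T * (S - A t * B t)) $$ (i,j))"
    for t
  have "E t = 0"
  proof (rule gronwall_vanishing[of E E'])
    show "(E has_real_derivative E' t) (at t within {0..})" if "0 \<le> t" for t
      unfolding E_def E'_def
      by (intro DERIV_add frob2_has_real_derivative[OF mat_deriv_on_offdiag_mat] dA dB that)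
    have "frob2 (offdiag_mat (A 0)) = 0" "frob2 (offdiag_mat (B 0)) = 0"
      using diag0 by (simp_all add: frob2_eq_0_iff diagonal_mat_iff_offdiag_mat_eq_0)
    then show "E 0 = 0"
      by (simp add: E_def)
    show "0 \<le> E t" for t
      by (simp add: E_def frob2_nonneg add_nonneg_nonneg)
    show "\<exists>K. \<forall>t\<in>{0..T}. E' t \<le> K * E t" if "0 \<le> T" for T
    proof -
      obtain c where bounded: "\<And>t. t \<in> {0..T} \<Longrightarrow> max_abs_le (A t) c \<and> max_abs_le (B t) c"
        and "max_abs_le S c"
        using lora_flow_bounded_on_interval[OF flow \<open>0 \<le> T\<close>] by blast
      have "E' t \<le> 4 * real n * real r * real m * (c + real r * c^2) * E t" if "t \<in> {0..T}" for t
        unfolding E'_def E_def using bounded[OF that] \<open>max_abs_le S c\<close> that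
        by (intro offdiag_energy_deriv_le lora_flow_carrier[OF flow] S) auto
      then show ?thesis by blast
    qed
  qed fact
  then have "frob2 (offdiag_mat (A t)) = 0" "frob2 (offdiag_mat (B t)) = 0"
    unfolding E_def by (simp_all add: add_nonneg_eq_0_iff frob2_nonneg)
  then show ?thesis
    by (simp add: frob2_eq_0_iff diagonal_mat_iff_offdiag_mat_eq_0)
qed

lemma lora_flow_diagonal_product_tendsto:
  assumes flow: "lora_flow n r m S A B" and S: "S \<in> carrier_mat n m"
    and diag: "\<And>t. 0 \<le> t \<Longrightarrow> diagonal_mat (A t) \<and> diagonal_mat (B t)"
    and i: "i < n" "i < r" "i < m" and "A 0 $$ (i,i) = 0" "B 0 $$ (i,i) \<noteq> 0"
  shows "((\<lambda>t. A t $$ (i,i) * B t $$ (i,i)) \<longlongrightarrow> S $$ (i,i)) at_top"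
proof (rule scalar_flow_product_tendsto)
  have dA: "mat_deriv_on n r A (\<lambda>t. (S - A t * B t) * (B t)\<^sup>T)"
    and dB: "mat_deriv_on r m B (\<lambda>t. (A t)\<^sup>T * (S - A t * B t))"
    using flow by (simp_all add: lora_flow_def)
  fix t :: real assume t: "0 \<le> t"
  have A: "A t \<in> carrier_mat n r" and B: "B t \<in> carrier_mat r m"
    using lora_flow_carrier[OF flow t] .
  have R: "S - A t * B t \<in> carrier_mat n m"
    using A B S by auto
  have residual: "(S - A t * B t) $$ (i,i) = S $$ (i,i) - A t $$ (i,i) * B t $$ (i,i)"
    using index_mult_diagonal_left[OF A _ B] diag[OF t] A B i by simp
  have "((S - A t * B t) * (B t)\<^sup>T) $$ (i,i) = (S - A t * B t) $$ (i,i) * B t $$ (i,i)"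
    using index_mult_diagonal_right[OF R _ diagonal_mat_transpose] diag[OF t] B i by simp
  then show "((\<lambda>s. A s $$ (i,i)) has_real_derivative
      (S $$ (i,i) - A t $$ (i,i) * B t $$ (i,i)) * B t $$ (i,i)) (at t within {0..})"
    using mat_deriv_onD[OF dA t i(1,2)] residual by simp
  have "((A t)\<^sup>T * (S - A t * B t)) $$ (i,i) = A t $$ (i,i) * (S - A t * B t) $$ (i,i)"
    using index_mult_diagonal_left[OF _ diagonal_mat_transpose R] diag[OF t] A i by simp
  then show "((\<lambda>s. B s $$ (i,i)) has_real_derivative
      A t $$ (i,i) * (S $$ (i,i) - A t $$ (i,i) * B t $$ (i,i))) (at t within {0..})"
    using mat_deriv_onD[OF dB t i(2,3)] residual by simp
qed fact+

lemma mat_tendsto_product_of_diagonal_factors: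
  fixes Y X A B :: "real \<Rightarrow> real mat"
  assumes U: "U \<in> carrier_mat n n" and V: "V \<in> carrier_mat m m" and "r \<le> n" "r \<le> m"
    and factors: "\<And>t. 0 \<le> t \<Longrightarrow> Y t = U * A t \<and> X t = B t * V\<^sup>T"
    and A: "\<And>t. 0 \<le> t \<Longrightarrow> A t \<in> carrier_mat n r \<and> diagonal_mat (A t)"
    and B: "\<And>t. 0 \<le> t \<Longrightarrow> B t \<in> carrier_mat r m \<and> diagonal_mat (B t)"
    and lim: "\<And>i. i < r \<Longrightarrow> ((\<lambda>t. A t $$ (i,i) * B t $$ (i,i)) \<longlongrightarrow> s i) at_top"
  shows "mat_tendsto_at_top n m (\<lambda>t. Y t * X t) (mat n m (\<lambda>(a,b). \<Sum>i<r. s i * U $$ (a,i) * V $$ (b,i)))"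
  unfolding mat_tendsto_at_top_def
proof (intro conjI allI impI)
  fix a b assume ab: "a < n" "b < m"
  have entry: "(Y t * X t) $$ (a,b) = (\<Sum>i<r. A t $$ (i,i) * B t $$ (i,i) * U $$ (a,i) * V $$ (b,i))"
    if t: "0 \<le> t" for t
  proof -
    have "Y t * X t = (U * A t) * (B t * V\<^sup>T)"
      using factors[OF t] by simp
    also have "\<dots> $$ (a,b) = (\<Sum>i<r. (U * A t) $$ (a,i) * (B t * V\<^sup>T) $$ (i,b))"
      using A[OF t] B[OF t] U V ab by (intro index_mult_mat_eq_sum) auto
    also have "\<dots> = (\<Sum>i<r. A t $$ (i,i) * B t $$ (i,i) * U $$ (a,i) * V $$ (b,i))"
    proof (intro sum.cong refl)
      fix i assume "i \<in> {..<r}"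
      then have "(U * A t) $$ (a,i) = U $$ (a,i) * A t $$ (i,i)"
        "(B t * V\<^sup>T) $$ (i,b) = B t $$ (i,i) * V $$ (b,i)"
        using index_mult_diagonal_right[OF U] index_mult_diagonal_left[of "B t" r m "V\<^sup>T" m]
          A[OF t] B[OF t] V ab \<open>r \<le> n\<close> \<open>r \<le> m\<close> by auto
      then show "(U * A t) $$ (a,i) * (B t * V\<^sup>T) $$ (i,b) = A t $$ (i,i) * B t $$ (i,i) * U $$ (a,i) * V $$ (b,i)"
        by simp
    qed
    finally show ?thesis .
  qed
  have "((\<lambda>t. \<Sum>i<r. A t $$ (i,i) * B t $$ (i,i) * U $$ (a,i) * V $$ (b,i))
      \<longlongrightarrow> (\<Sum>i<r. s i * U $$ (a,i) * V $$ (b,i))) at_top"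
    by (intro tendsto_intros lim) auto
  then have "((\<lambda>t. (Y t * X t) $$ (a,b)) \<longlongrightarrow> (\<Sum>i<r. s i * U $$ (a,i) * V $$ (b,i))) at_top"
    by (rule tendsto_at_top_nonneg_cong[rotated]) (simp add: entry)
  then show "((\<lambda>t. (Y t * X t) $$ (a,b)) \<longlongrightarrow> mat n m (\<lambda>(a,b). \<Sum>i<r. s i * U $$ (a,i) * V $$ (b,i)) $$ (a,b)) at_top"
    using ab by simp
qed simp

lemma frob2_residual_tendsto_of_diagonal_factors:
  fixes Y X A B :: "real \<Rightarrow> real mat"
  assumes U: "orth_mat n U" and V: "orth_mat m V" and S: "S \<in> carrier_mat n m" "diagonal_mat S"
    and W: "W = U * S * V\<^sup>T" and "r \<le> n" "r \<le> m"
    and factors: "\<And>t. 0 \<le> t \<Longrightarrow> Y t = U * A t \<and> X t = B t * V\<^sup>T"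
    and A: "\<And>t. 0 \<le> t \<Longrightarrow> A t \<in> carrier_mat n r \<and> diagonal_mat (A t)"
    and B: "\<And>t. 0 \<le> t \<Longrightarrow> B t \<in> carrier_mat r m \<and> diagonal_mat (B t)"
    and lim: "\<And>i. i < r \<Longrightarrow> ((\<lambda>t. A t $$ (i,i) * B t $$ (i,i)) \<longlongrightarrow> S $$ (i,i)) at_top"
  shows "((\<lambda>t. frob2 (W - Y t * X t)) \<longlongrightarrow> (\<Sum>i\<in>{r..<min n m}. (S $$ (i,i))^2)) at_top"
proof -
  define p where "p t i = (if i < r then A t $$ (i,i) * B t $$ (i,i) else 0)" for t i
  have error: "frob2 (W - Y t * X t) = (\<Sum>i<min n m. (S $$ (i,i) - p t i)^2)" if t: "0 \<le> t" for t
  proof -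
    have AB: "(A t * B t) $$ (i,j) = (if i = j then p t i else 0)" if "i < n" "j < m" for i j
      using index_mult_diagonal_mat[of "A t" n r "B t" m i j] A[OF t] B[OF t] that by (simp add: p_def)
    have R: "S - A t * B t \<in> carrier_mat n m" "diagonal_mat (S - A t * B t)"
      using S A[OF t] B[OF t] AB by (auto simp: diagonal_mat_def)
    have "W - Y t * X t = U * ((S - A t * B t) * V\<^sup>T)"
      using diff_conj_eq_conj_diff[OF orth_matD(1)[OF U] orth_matD(1)[OF V], of "A t" r "B t" S]
        factors[OF t] A[OF t] B[OF t] S W by simp
    then have "frob2 (W - Y t * X t) = frob2 (U * ((S - A t * B t) * V\<^sup>T))"
      by simp
    also have "\<dots> = frob2 (S - A t * B t)"
      using frob2_orth_mult[OF U, of "(S - A t * B t) * V\<^sup>T" m] frob2_mult_orth_transpose[OF V R(1)]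
        R orth_matD(1)[OF V] by simp
    also have "\<dots> = (\<Sum>i<min n m. (S $$ (i,i) - p t i)^2)"
      using frob2_diagonal_mat[OF R] S A[OF t] B[OF t] AB by (auto intro!: sum.cong)
    finally show ?thesis .
  qed
  have "((\<lambda>t. \<Sum>i<min n m. (S $$ (i,i) - p t i)^2)
      \<longlongrightarrow> (\<Sum>i<min n m. (S $$ (i,i) - (if i < r then S $$ (i,i) else 0))^2)) at_top"
    unfolding p_def by (intro tendsto_intros) (auto intro: lim)
  also have "(\<Sum>i<min n m. (S $$ (i,i) - (if i < r then S $$ (i,i) else 0))^2) = (\<Sum>i\<in>{r..<min n m}. (S $$ (i,i))^2)"
    by (rule sum.mono_neutral_cong_right) auto
  finally show ?thesis
    by (rule tendsto_at_top_nonneg_cong[rotated]) (simp add: error)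
qed

theorem theorem2p11:
  fixes n m r :: nat
    and W0 U V \<Sigma>0 Xt0 :: "real mat"
    and Y X :: "real \<Rightarrow> real mat"
  assumes W0_dim: "W0 \<in> carrier_mat n m"
    and r_pos: "1 \<le> r"
    and r_rank: "r < vec_space.rank n W0"
    and U_orth: "orth_mat n U"
    and V_orth: "orth_mat m V"
    and Sigma_dim: "\<Sigma>0 \<in> carrier_mat n m"
    and Sigma_diag: "diagonal_mat \<Sigma>0"
    and Sigma_sorted: "\<forall>i j. i \<le> j \<longrightarrow> j < min n m \<longrightarrow> \<Sigma>0 $$ (j,j) \<le> \<Sigma>0 $$ (i,i)"
    and Sigma_nonneg: "\<forall>i < min n m. 0 \<le> \<Sigma>0 $$ (i,i)"
    and svd: "W0 = U * \<Sigma>0 * V\<^sup>T"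
    and Xt0_dim: "Xt0 \<in> carrier_mat r m"
    and Xt0_diag: "diagonal_mat Xt0"
    and Xt0_nz: "\<forall>i < r. Xt0 $$ (i,i) \<noteq> 0"
    and gd_bounded: "\<exists>eta0 > 0. \<exists>C. \<forall>eta. 0 < eta \<and> eta \<le> eta0 \<longrightarrow>
        (\<forall>k. frob2 (fst (lora_gd W0 eta (0\<^sub>m n r) (Xt0 * V\<^sup>T) k)) +
             frob2 (snd (lora_gd W0 eta (0\<^sub>m n r) (Xt0 * V\<^sup>T) k)) \<le> C)"
    and Y_ode: "mat_deriv_on n r Y (\<lambda>t. (W0 - Y t * X t) * (X t)\<^sup>T)"
    and X_ode: "mat_deriv_on r m X (\<lambda>t. (Y t)\<^sup>T * (W0 - Y t * X t))"
    and Y_init: "Y 0 = 0\<^sub>m n r"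
    and X_init: "X 0 = Xt0 * V\<^sup>T"
  shows "mat_tendsto_at_top n m (\<lambda>t. Y t * X t)
           (mat n m (\<lambda>(a,b). \<Sum>i<r. \<Sigma>0 $$ (i,i) * U $$ (a,i) * V $$ (b,i)))
       \<and> ((\<lambda>t. frob2 (W0 - Y t * X t)) \<longlongrightarrow> (\<Sum>i\<in>{r..<min n m}. (\<Sigma>0 $$ (i,i))^2)) at_top"
proof -
  have "r < n" "r < m"
    using r_rank vec_space.rank_le_nr[OF W0_dim] vec_space.rank_le_nc[OF W0_dim] by linarith+
  define A where "A t = U\<^sup>T * Y t" for t
  define B where "B t = X t * V" for t
  have flow: "lora_flow n r m \<Sigma>0 A B"
    unfolding A_def[abs_def] B_def[abs_def] using Y_ode X_ode
    by (intro lora_flow_orth_conj[OF _ U_orth V_orth Sigma_dim svd]) (simp add: lora_flow_def)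
  have factors: "Y t = U * A t \<and> X t = B t * V\<^sup>T" if "0 \<le> t" for t
    using orth_mat_factor_left[OF U_orth] orth_mat_factor_right[OF V_orth]
      mat_deriv_on_carrier[OF Y_ode that] mat_deriv_on_carrier[OF X_ode that] by (simp add: A_def B_def)
  have A0: "A 0 = 0\<^sub>m n r" and B0: "B 0 = Xt0"
    using Y_init X_init orth_mat_cancel_right[OF V_orth Xt0_dim] orth_matD(1)[OF U_orth]
    by (auto simp: A_def B_def)
  have diag: "diagonal_mat (A t) \<and> diagonal_mat (B t)" if "0 \<le> t" for t
    using lora_flow_stays_diagonal[OF flow Sigma_dim Sigma_diag _ _ that] A0 B0 Xt0_diag
    by (simp add: diagonal_mat_def)
  have lim: "((\<lambda>t. A t $$ (i,i) * B t $$ (i,i)) \<longlongrightarrow> \<Sigma>0 $$ (i,i)) at_top" if "i < r" for i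
    using lora_flow_diagonal_product_tendsto[OF flow Sigma_dim diag] that A0 B0 Xt0_nz \<open>r < n\<close> \<open>r < m\<close>
    by simp
  show ?thesis
    using mat_tendsto_product_of_diagonal_factors[OF orth_matD(1)[OF U_orth] orth_matD(1)[OF V_orth] _ _ factors]
      frob2_residual_tendsto_of_diagonal_factors[OF U_orth V_orth Sigma_dim Sigma_diag svd _ _ factors]
      lora_flow_carrier[OF flow] diag lim \<open>r < n\<close> \<open>r < m\<close>
    by simp
qed

end
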